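(* Let $\mathcal{H}$ and $\mathcal{K}$ be finite-dimensional complex Hilbert spaces and let $\Psi: B(\mathcal{H})\to B(\mathcal{K})$ be a Hermitian-preserving trace-preserving linear map, with dual (adjoint) map $\Psi^*: B(\mathcal{K})\to B(\mathcal{H})$ defined by $\operatorname{Tr}(\Psi^*(Y)^\dagger X)=\operatorname{Tr}(Y^\dagger\Psi(X))$ for all $X\in B(\mathcal{H})$, $Y\in B(\mathcal{K})$. Then exactly one of the following holds: (1) $\Psi$ is semi-positive, i.e. there is an invertible density matrix $\rho\in B(\mathcal{H})$ such that $\Psi(\rho)$ is an invertible density matrix; (2) $-\Psi^*$ is semi-nonnegative, i.e. there is a density matrix $\sigma\in B(\mathcal{K})$ such that $-\Psi^*(\sigma)$ is positive semidefinite.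
   Context: $B(\mathcal{H})$ denotes all linear operators on $\mathcal{H}$; a density matrix is a positive semidefinite operator of trace one. A map is Hermitian-preserving if $\Psi(X^\dagger)=\Psi(X)^\dagger$ and trace-preserving if $\operatorname{Tr}\Psi(X)=\operatorname{Tr}X$. *)

theory Defs
  imports "HOL-Analysis.Analysis"
begin

text \<open>Operators on a finite-dimensional complex Hilbert space of dimension CARD('n),
  represented as complex CARD('n) x CARD('n) matrices.\<close>

definition mtrace :: "complex^'n^'n \<Rightarrow> complex" where
  "mtrace A = (\<Sum>i\<in>UNIV. A $ i $ i)"

definition madj :: "complex^'n^'m \<Rightarrow> complex^'m^'n" where
  "madj A = (\<chi> i j. cnj (A $ j $ i))"

definition msmult :: "complex \<Rightarrow> complex^'n^'m \<Rightarrow> complex^'n^'m" where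
  "msmult c A = (\<chi> i j. c * A $ i $ j)"

definition psd :: "complex^'n^'n \<Rightarrow> bool" where
  "psd A \<longleftrightarrow> (\<forall>x::complex^'n.
      Im (\<Sum>i\<in>UNIV. cnj (x $ i) * (A *v x) $ i) = 0 \<and>
      Re (\<Sum>i\<in>UNIV. cnj (x $ i) * (A *v x) $ i) \<ge> 0)"

definition density :: "complex^'n^'n \<Rightarrow> bool" where
  "density A \<longleftrightarrow> psd A \<and> mtrace A = 1"

definition lin_map :: "(complex^'n^'n \<Rightarrow> complex^'m^'m) \<Rightarrow> bool" where
  "lin_map \<Psi> \<longleftrightarrow> (\<forall>X Y. \<Psi> (X + Y) = \<Psi> X + \<Psi> Y) \<and> (\<forall>c X. \<Psi> (msmult c X) = msmult c (\<Psi> X))"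

definition herm_pres :: "(complex^'n^'n \<Rightarrow> complex^'m^'m) \<Rightarrow> bool" where
  "herm_pres \<Psi> \<longleftrightarrow> (\<forall>X. \<Psi> (madj X) = madj (\<Psi> X))"

definition trace_pres :: "(complex^'n^'n \<Rightarrow> complex^'m^'m) \<Rightarrow> bool" where
  "trace_pres \<Psi> \<longleftrightarrow> (\<forall>X. mtrace (\<Psi> X) = mtrace X)"

definition is_dual_map :: "(complex^'n^'n \<Rightarrow> complex^'m^'m) \<Rightarrow> (complex^'m^'m \<Rightarrow> complex^'n^'n) \<Rightarrow> bool" where
  "is_dual_map \<Psi> \<Psi>s \<longleftrightarrow> (\<forall>X Y. mtrace (madj (\<Psi>s Y) ** X) = mtrace (madj Y ** \<Psi> X))"

definition semi_positive :: "(complex^'n^'n \<Rightarrow> complex^'m^'m) \<Rightarrow> bool" where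
  "semi_positive \<Psi> \<longleftrightarrow> (\<exists>\<rho>. density \<rho> \<and> invertible \<rho> \<and> density (\<Psi> \<rho>) \<and> invertible (\<Psi> \<rho>))"

definition semi_nonnegative :: "(complex^'m^'m \<Rightarrow> complex^'n^'n) \<Rightarrow> bool" where
  "semi_nonnegative \<Phi> \<longleftrightarrow> (\<exists>\<sigma>. density \<sigma> \<and> psd (\<Phi> \<sigma>))"

end

theory Submission
  imports Defs
begin

text \<open>Exclusivity: if \<open>\<rho>\<close> and \<open>\<Psi> \<rho>\<close> are positive definite and \<open>- \<Psi>s \<sigma>\<close> is positive
  semidefinite for a density matrix \<open>\<sigma>\<close>, then
  \<open>0 < Re tr (\<sigma> \<Psi>(\<rho>)) = Re tr (\<Psi>s(\<sigma>) \<rho>) \<le> 0\<close>.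
  The positivity of \<open>Re tr (S B)\<close> for \<open>S \<ge> 0\<close>, \<open>S \<noteq> 0\<close>, \<open>B > 0\<close> comes from writing \<open>S\<close>
  as a sum of rank-one matrices \<open>v v\<^sup>*\<close>, obtained by Cholesky-type deflation.

  Exhaustiveness is a separation argument in the real inner product space of complex
  matrices, where \<open>inner X Y = Re tr (X\<^sup>* Y)\<close>. If \<open>\<Psi>\<close> is not semi-positive, the convex
  set of all \<open>\<Psi>(\<rho>) - P + K\<close> with \<open>\<rho>, P\<close> positive definite and \<open>K\<close> anti-Hermitian
  misses \<open>0\<close>: a zero would force \<open>K = 0\<close> and \<open>\<Psi>(\<rho>) = P\<close>, and normalising \<open>\<rho>\<close>
  would make \<open>\<Psi>\<close> semi-positive. A separating functional \<open>a\<close> is Hermitian, \<open>-a\<close> is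
  positive semidefinite and \<open>inner a (\<Psi> \<rho>) \<ge> 0\<close> for every positive semidefinite \<open>\<rho>\<close>;
  normalising \<open>-a\<close> to trace one gives the required \<open>\<sigma>\<close>.\<close>

lemma nonneg_if_nonneg_on_ray:
  fixes c d :: real
  assumes "\<And>r. r > 0 \<Longrightarrow> 0 \<le> c + r * d"
  shows "0 \<le> c" "0 \<le> d"
proof -
  show "0 \<le> c"
  proof (rule ccontr)
    assume "\<not> 0 \<le> c"
    define r where "r = - c / (2 * (\<bar>d\<bar> + 1))"
    have r: "r > 0"
      unfolding r_def using \<open>\<not> 0 \<le> c\<close> by (intro divide_pos_pos) auto
    then have "r * d \<le> r * (\<bar>d\<bar> + 1)"
      by (intro mult_left_mono) auto
    moreover have "r * (\<bar>d\<bar> + 1) = - c / 2"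
      unfolding r_def using abs_ge_zero[of d] by (simp add: field_simps)
    ultimately show False
      using assms[OF r] \<open>\<not> 0 \<le> c\<close> by linarith
  qed
  show "0 \<le> d"
  proof (rule ccontr)
    assume "\<not> 0 \<le> d"
    define r where "r = (\<bar>c\<bar> + 1) / - d"
    have r: "r > 0"
      unfolding r_def using \<open>\<not> 0 \<le> d\<close> by (intro divide_pos_pos) auto
    moreover have "r * d = - (\<bar>c\<bar> + 1)"
      using \<open>\<not> 0 \<le> d\<close> by (simp add: r_def)
    ultimately show False
      using assms[OF r] by linarith
  qed
qed

section \<open>Sesquilinear forms\<close>

definition sesq :: "complex^'n^'n \<Rightarrow> complex^'n \<Rightarrow> complex^'n \<Rightarrow> complex" where
  "sesq A x y = (\<Sum>i\<in>UNIV. cnj (x $ i) * (A *v y) $ i)"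

definition outer :: "complex^'n \<Rightarrow> complex^'n^'n" where
  "outer v = (\<chi> i j. v $ i * cnj (v $ j))"

definition hermitian :: "complex^'n^'n \<Rightarrow> bool" where
  "hermitian A \<longleftrightarrow> madj A = A"

lemma cnj_mult_self: "cnj z * z = of_real ((cmod z)\<^sup>2)"
  by (metis complex_norm_square mult.commute)

lemma psd_iff_sesq: "psd A \<longleftrightarrow> (\<forall>x. Im (sesq A x x) = 0 \<and> 0 \<le> Re (sesq A x x))"
  unfolding psd_def sesq_def ..

lemma sesq_entries: "sesq A x y = (\<Sum>i\<in>UNIV. \<Sum>j\<in>UNIV. cnj (x $ i) * A $ i $ j * y $ j)"
  by (simp add: sesq_def matrix_vector_mult_def sum_distrib_left mult.assoc)

lemma sesq_add_left: "sesq A (x + y) z = sesq A x z + sesq A y z"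
  by (simp add: sesq_def distrib_right sum.distrib)

lemma sesq_add_right: "sesq A x (y + z) = sesq A x y + sesq A x z"
  by (simp add: sesq_def matrix_vector_right_distrib distrib_left sum.distrib)

lemma sesq_smult_left: "sesq A (t *s x) y = cnj t * sesq A x y"
  by (simp add: sesq_def sum_distrib_left mult.assoc)

lemma sesq_smult_right: "sesq A x (t *s y) = t * sesq A x y"
  by (simp add: sesq_def vector_scalar_commute sum_distrib_left algebra_simps)

lemma sesq_add: "sesq (A + B) x y = sesq A x y + sesq B x y"
  by (simp add: sesq_def matrix_vector_mult_add_rdistrib distrib_left sum.distrib)

lemma sesq_diff: "sesq (A - B) x y = sesq A x y - sesq B x y"
  by (simp add: sesq_entries algebra_simps sum_subtractf)

lemma sesq_minus: "sesq (- A) x y = - sesq A x y"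
  by (simp add: sesq_entries sum_negf)

lemma sesq_scaleR: "sesq (r *\<^sub>R A) x y = of_real r * sesq A x y"
  by (simp add: sesq_entries sum_distrib_left scaleR_conv_of_real[where 'a=complex] algebra_simps)

lemma sesq_axis_left: "sesq A (axis i 1) y = (A *v y) $ i"
proof -
  have "cnj (axis i 1 $ k) * (A *v y) $ k = (if k = i then (A *v y) $ k else 0)" for k
    by (simp add: axis_def)
  then show ?thesis
    unfolding sesq_def by simp
qed

lemma sesq_axis_axis: "sesq A (axis i 1) (axis j 1) = A $ i $ j"
  unfolding sesq_axis_left by (simp add: matrix_vector_mult_def axis_def if_distrib cong: if_cong)

lemma sesq_outer:
  "sesq (outer v) x y = cnj (\<Sum>k\<in>UNIV. cnj (v $ k) * x $ k) * (\<Sum>k\<in>UNIV. cnj (v $ k) * y $ k)"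
  by (simp add: sesq_entries outer_def sum_product algebra_simps)

lemma hermitian_cnj: "hermitian A \<Longrightarrow> cnj (A $ i $ j) = A $ j $ i"
  unfolding hermitian_def madj_def by (metis vec_lambda_beta)

lemma hermitianI: "(\<And>i j. cnj (A $ i $ j) = A $ j $ i) \<Longrightarrow> hermitian A"
  unfolding hermitian_def madj_def by (simp add: vec_eq_iff)

lemma sesq_swap: "hermitian A \<Longrightarrow> sesq A y x = cnj (sesq A x y)"
  unfolding sesq_entries by (subst sum.swap) (simp add: hermitian_cnj algebra_simps)

lemma hermitian_sesq_real: "hermitian A \<Longrightarrow> Im (sesq A x x) = 0"
  using sesq_swap[of A x x] by (metis cnj.simps(2) neg_equal_zero)

lemma sesq_expand:
  assumes "hermitian A"
  shows "sesq A (x + t *s y) (x + t *s y)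
    = sesq A x x + t * sesq A x y + cnj (t * sesq A x y) + cnj t * t * sesq A y y"
  using sesq_swap[OF assms, of y x]
  by (simp add: sesq_add_left sesq_add_right sesq_smult_left sesq_smult_right algebra_simps)

section \<open>Positive matrices\<close>

lemma psd_hermitian:
  assumes "psd A"
  shows "hermitian A"
proof (rule hermitianI)
  fix i j
  have q: "sesq A (axis i 1 + t *s axis j 1) (axis i 1 + t *s axis j 1)
      = A $ i $ i + t * A $ i $ j + cnj t * A $ j $ i + cnj t * t * A $ j $ j" for t
    by (simp add: sesq_add_left sesq_add_right sesq_smult_left sesq_smult_right sesq_axis_axis
        algebra_simps)
  have im: "Im (sesq A x x) = 0" for x
    using assms unfolding psd_iff_sesq by blast
  have "Im (A $ k $ k) = 0" for k
    using im[of "axis k 1"] by (simp add: sesq_axis_axis)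
  then have "Im (A $ i $ j + A $ j $ i) = 0" "Re (A $ i $ j - A $ j $ i) = 0"
    using im[of "axis i 1 + 1 *s axis j 1"] im[of "axis i 1 + \<i> *s axis j 1"]
    unfolding q by simp_all
  then show "cnj (A $ i $ j) = A $ j $ i"
    by (simp add: complex_eq_iff)
qed

text \<open>Along \<open>e\<^sub>i + t y\<close> the form is affine in \<open>t\<close>, since its quadratic term vanishes;
  nonnegativity then forces the linear coefficient \<open>(A y)\<^sub>i\<close> to be zero.\<close>
lemma psd_sesq_eq_0_imp_kernel:
  assumes "psd A" and "sesq A y y = 0"
  shows "A *v y = 0"
proof -
  have "(A *v y) $ i = 0" for i
  proof -
    define b where "b = sesq A (axis i 1) y"
    define n where "n = (cmod b)\<^sup>2"
    have "0 \<le> Re (sesq A (axis i 1) (axis i 1)) + r * (- 2 * n)" if "r > 0" for r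
    proof -
      define z where "z = axis i 1 + (- of_real r * cnj b) *s y"
      have tb: "(- of_real r * cnj b) * b = - of_real (r * n)"
        unfolding mult.assoc cnj_mult_self n_def by simp
      have "sesq A z z = sesq A (axis i 1) (axis i 1) - 2 * of_real (r * n)"
        unfolding z_def sesq_expand[OF psd_hermitian[OF assms(1)]] b_def[symmetric] assms(2) tb
        by simp
      moreover have "0 \<le> Re (sesq A z z)"
        using assms(1) unfolding psd_iff_sesq by blast
      ultimately show ?thesis
        by simp
    qed
    then have "0 \<le> - 2 * n"
      by (rule nonneg_if_nonneg_on_ray(2))
    then show ?thesis
      by (simp add: n_def b_def sesq_axis_left)
  qed
  then show ?thesis
    by (simp add: vec_eq_iff)
qed

lemma psd_diag_zero:
  assumes "psd A" and "A $ i $ i = 0"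
  shows "A $ j $ i = 0" and "A $ i $ j = 0"
proof -
  have "A *v axis i 1 = 0"
    using assms by (intro psd_sesq_eq_0_imp_kernel) (simp_all add: sesq_axis_axis)
  then show "A $ j $ i = 0"
    by (metis sesq_axis_axis sesq_axis_left zero_index)
  then show "A $ i $ j = 0"
    using hermitian_cnj[OF psd_hermitian[OF assms(1)], of j i] by simp
qed

text \<open>Subtracting \<open>c c\<^sup>*\<close> evaluates the form of \<open>A\<close> at the point of the line
  \<open>x + t e\<^sub>i\<close> where the \<open>i\<close>-th coordinate of \<open>A (x + t e\<^sub>i)\<close> vanishes.\<close>
lemma sesq_deflate:
  fixes A :: "complex^'n^'n" and x :: "complex^'n"
  assumes "hermitian A" and "A $ i $ i = of_real (s * s)" and "s \<noteq> 0"
  defines "c \<equiv> (\<chi> k. A $ k $ i / of_real s)"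
  defines "t \<equiv> - (A *v x) $ i / A $ i $ i"
  shows "sesq (A - outer c) x x = sesq A (x + t *s axis i 1) (x + t *s axis i 1)"
proof -
  define a where "a = s * s"
  define b where "b = (A *v x) $ i"
  define w where "w = cnj b * b / of_real a"
  have "a \<noteq> 0"
    using assms(3) by (simp add: a_def)
  have "(\<Sum>k\<in>UNIV. cnj (c $ k) * x $ k) = b / of_real s"
    by (simp add: c_def hermitian_cnj[OF assms(1)] b_def matrix_vector_mult_def sum_divide_distrib)
  then have "sesq (outer c) x x = w"
    by (simp add: sesq_outer w_def a_def)
  moreover have "sesq A x (axis i 1) = cnj b"
    unfolding b_def sesq_swap[OF assms(1), of x] sesq_axis_left ..
  moreover have "t * cnj b = - w" and "cnj w = w" and "cnj t * t * of_real a = w"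
    using \<open>a \<noteq> 0\<close>
    by (simp_all add: t_def assms(2) b_def[symmetric] a_def[symmetric] w_def field_simps)
  ultimately show ?thesis
    unfolding sesq_expand[OF assms(1)] sesq_diff sesq_axis_axis assms(2) a_def[symmetric] by simp
qed

lemma psd_deflate:
  assumes "psd A" and "A $ i $ i \<noteq> 0"
  defines "c \<equiv> (\<chi> k. A $ k $ i / of_real (sqrt (Re (A $ i $ i))))"
  shows "psd (A - outer c)" and "(A - outer c) $ i $ i = 0"
    and "A $ k $ k = 0 \<Longrightarrow> (A - outer c) $ k $ k = 0"
proof -
  define s where "s = sqrt (Re (A $ i $ i))"
  have hA: "hermitian A"
    using psd_hermitian[OF assms(1)] .
  have "Im (A $ i $ i) = 0" "0 \<le> Re (A $ i $ i)"
    using assms(1) unfolding psd_iff_sesq by (metis sesq_axis_axis)+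
  then have Aii: "A $ i $ i = of_real (s * s)" and "s \<noteq> 0"
    using assms(2) by (auto simp: s_def complex_eq_iff)
  have c: "c = (\<chi> k. A $ k $ i / of_real s)"
    by (simp add: c_def s_def)
  show "psd (A - outer c)"
    using assms(1) unfolding psd_iff_sesq c sesq_deflate[OF hA Aii \<open>s \<noteq> 0\<close>] by blast
  have diag: "outer c $ k $ k = A $ k $ i * A $ i $ k / A $ i $ i" for k
    unfolding c Aii by (simp add: outer_def hermitian_cnj[OF hA])
  show "(A - outer c) $ i $ i = 0"
    using diag[of i] assms(2) by simp
  show "(A - outer c) $ k $ k = 0" if "A $ k $ k = 0"
    using diag[of k] psd_diag_zero[OF assms(1) that] that by simp
qed

text \<open>Repeated deflation (a Cholesky factorisation): each step zeroes one more diagonal entry.\<close>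
lemma psd_eq_sum_outer:
  assumes "psd A"
  shows "\<exists>vs. A = sum_list (map outer vs)"
  using assms
proof (induction "card {k. A $ k $ k \<noteq> 0}" arbitrary: A rule: less_induct)
  case less
  show ?case
  proof (cases "\<exists>i. A $ i $ i \<noteq> 0")
    case False
    then have "A = 0"
      using psd_diag_zero(1)[OF less.prems] by (simp add: vec_eq_iff)
    then show ?thesis
      by (intro exI[of _ "[]"]) simp
  next
    case True
    then obtain i where i: "A $ i $ i \<noteq> 0" by blast
    define c where "c = (\<chi> k. A $ k $ i / of_real (sqrt (Re (A $ i $ i))))"
    note deflate = psd_deflate[OF less.prems i, folded c_def]
    have "{k. (A - outer c) $ k $ k \<noteq> 0} \<subseteq> {k. A $ k $ k \<noteq> 0} - {i}"
      using deflate(2,3) by blast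
    then have "card {k. (A - outer c) $ k $ k \<noteq> 0} \<le> card ({k. A $ k $ k \<noteq> 0} - {i})"
      by (intro card_mono) simp_all
    also have "\<dots> < card {k. A $ k $ k \<noteq> 0}"
      using i by (intro card_Diff1_less) simp_all
    finally obtain vs where "A - outer c = sum_list (map outer vs)"
      using less.hyps deflate(1) by blast
    then have "A = sum_list (map outer (c # vs))"
      by (simp add: algebra_simps)
    then show ?thesis ..
  qed
qed

definition pd :: "complex^'n^'n \<Rightarrow> bool" where
  "pd A \<longleftrightarrow> (\<forall>x. Im (sesq A x x) = 0 \<and> (x \<noteq> 0 \<longrightarrow> 0 < Re (sesq A x x)))"

lemma sesq_zero_left [simp]: "sesq A 0 y = 0"
  by (simp add: sesq_def)

lemma pd_imp_psd: "pd A \<Longrightarrow> psd A"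
  unfolding pd_def psd_iff_sesq by (metis less_le order_refl sesq_zero_left zero_complex.sel(1))

lemma invertible_iff_kernel_trivial:
  fixes A :: "'a::field^'n^'n"
  shows "invertible A \<longleftrightarrow> (\<forall>x. A *v x = 0 \<longrightarrow> x = 0)"
  by (simp add: invertible_left_inverse matrix_left_invertible_ker)

lemma pd_iff_psd_invertible: "pd A \<longleftrightarrow> psd A \<and> invertible A"
proof
  assume "pd A"
  moreover have "x = 0" if "A *v x = 0" for x
    using \<open>pd A\<close> that unfolding pd_def sesq_def by fastforce
  ultimately show "psd A \<and> invertible A"
    by (simp add: pd_imp_psd invertible_iff_kernel_trivial)
next
  assume "psd A \<and> invertible A"
  then have "0 < Re (sesq A x x)" if "x \<noteq> 0" for x
    using psd_sesq_eq_0_imp_kernel[of A x] that unfolding psd_iff_sesq invertible_iff_kernel_trivial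
    by (metis complex_eq_iff less_eq_real_def zero_complex.simps)
  then show "pd A"
    using \<open>psd A \<and> invertible A\<close> unfolding pd_def psd_iff_sesq by blast
qed

lemma sesq_mat_1: "sesq (mat 1) x x = of_real (\<Sum>i\<in>UNIV. (cmod (x $ i))\<^sup>2)"
  unfolding sesq_def matrix_vector_mul_lid cnj_mult_self of_real_sum ..

lemma pd_mat_1: "pd (mat 1)"
  unfolding pd_def
proof (intro allI conjI impI)
  fix x :: "complex^'n"
  show "Im (sesq (mat 1) x x) = 0"
    by (simp add: sesq_mat_1)
  assume "x \<noteq> 0"
  then obtain i where "x $ i \<noteq> 0"
    by (auto simp: vec_eq_iff)
  then have "0 < (cmod (x $ i))\<^sup>2"
    by simp
  also have "\<dots> \<le> (\<Sum>i\<in>UNIV. (cmod (x $ i))\<^sup>2)"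
    by (rule member_le_sum) auto
  finally show "0 < Re (sesq (mat 1) x x)"
    by (simp add: sesq_mat_1)
qed

lemma pd_add_psd: "pd A \<Longrightarrow> psd B \<Longrightarrow> pd (A + B)"
  unfolding pd_def psd_iff_sesq by (simp add: sesq_add add_pos_nonneg)

lemma pd_scaleR: "pd A \<Longrightarrow> 0 < r \<Longrightarrow> pd (r *\<^sub>R A)"
  unfolding pd_def by (simp add: sesq_scaleR)

lemma psd_scaleR: "psd A \<Longrightarrow> 0 \<le> r \<Longrightarrow> psd (r *\<^sub>R A)"
  unfolding psd_iff_sesq by (simp add: sesq_scaleR)

lemma psd_outer: "psd (outer v)"
  unfolding psd_iff_sesq sesq_outer cnj_mult_self by simp

lemma psd_zero: "psd 0"
  unfolding psd_iff_sesq by (simp add: sesq_def)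

lemma pd_nonzero:
  assumes "pd A"
  shows "A \<noteq> 0"
proof
  assume "A = 0"
  then have "sesq A (axis i 1) (axis i 1) = 0" for i
    by (simp add: sesq_axis_axis)
  then show False
    using assms unfolding pd_def
    by (metis axis_eq_0_iff one_neq_zero zero_complex.sel(1) less_irrefl)
qed

lemma convex_pd: "convex {A. pd A}"
proof (rule convexI)
  fix A B :: "complex^'n^'n" and u v :: real
  assume A: "A \<in> {A. pd A}" and B: "B \<in> {A. pd A}" and uv: "0 \<le> u" "0 \<le> v" "u + v = 1"
  have "0 < Re (sesq (u *\<^sub>R A + v *\<^sub>R B) x x)" if "x \<noteq> 0" for x
    using convex_bound_lt[of "- Re (sesq A x x)" 0 "- Re (sesq B x x)" u v] A B uv that
    unfolding pd_def by (simp add: sesq_add sesq_scaleR)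
  then show "u *\<^sub>R A + v *\<^sub>R B \<in> {A. pd A}"
    using A B unfolding pd_def by (simp add: sesq_add sesq_scaleR)
qed

section \<open>The trace inner product\<close>

lemma inner_matrix: "inner X Y = Re (\<Sum>i\<in>UNIV. \<Sum>j\<in>UNIV. cnj (X $ i $ j) * Y $ i $ j)"
  by (simp add: inner_vec_def inner_complex_def Re_sum)

lemma inner_outer: "inner A (outer x) = Re (sesq A x x)"
proof -
  have "(\<Sum>i\<in>UNIV. \<Sum>j\<in>UNIV. cnj (A $ i $ j) * outer x $ i $ j) = cnj (sesq A x x)"
    by (simp add: sesq_entries outer_def algebra_simps)
  then show ?thesis
    unfolding inner_matrix by simp
qed

lemma inner_mat_1: "inner A (mat 1) = Re (mtrace A)"
proof -
  have "(\<Sum>j\<in>UNIV. cnj (A $ i $ j) * mat 1 $ i $ j) = cnj (A $ i $ i)" for i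
    by (simp add: mat_def if_distrib cong: if_cong)
  then show ?thesis
    unfolding inner_matrix mtrace_def by (simp add: Re_sum)
qed

lemma inner_madj: "inner (madj X) (madj Y) = inner X Y"
  unfolding inner_matrix madj_def by (simp, subst sum.swap, simp)

lemma Re_mtrace_madj_mult: "Re (mtrace (madj X ** Y)) = inner X Y"
  unfolding inner_matrix mtrace_def madj_def matrix_matrix_mult_def
  by (simp add: Re_sum, subst sum.swap, simp)

lemma mtrace_madj_mult_outer: "mtrace (madj A ** outer x) = cnj (sesq A x x)"
  unfolding mtrace_def sesq_entries outer_def matrix_matrix_mult_def madj_def
  by (simp add: sum_distrib_left) (subst sum.swap, simp add: algebra_simps)

lemma mtrace_mult_hermitian_real:
  assumes "hermitian A" and "hermitian B"
  shows "Im (mtrace (A ** B)) = 0"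
proof -
  have "cnj (mtrace (A ** B)) = (\<Sum>i\<in>UNIV. \<Sum>k\<in>UNIV. A $ k $ i * B $ i $ k)"
    unfolding mtrace_def matrix_matrix_mult_def
    by (simp add: hermitian_cnj[OF assms(1)] hermitian_cnj[OF assms(2)])
  also have "\<dots> = mtrace (A ** B)"
    unfolding mtrace_def matrix_matrix_mult_def by (subst sum.swap) (simp add: mult.commute)
  finally show ?thesis
    by (metis Reals_cnj_iff complex_is_Real_iff)
qed

lemma inner_sum_outer: "inner A (sum_list (map outer vs)) = (\<Sum>v\<leftarrow>vs. Re (sesq A v v))"
  by (induction vs) (simp_all add: inner_add_right inner_outer)

lemma inner_psd_nonneg:
  assumes "psd A" and "psd B"
  shows "0 \<le> inner A B"
proof -
  obtain vs where B: "B = sum_list (map outer vs)"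
    using psd_eq_sum_outer[OF assms(2)] by blast
  show ?thesis
    using assms(1) unfolding B inner_sum_outer psd_iff_sesq by (intro sum_list_nonneg) auto
qed

lemma inner_psd_pd_pos:
  assumes "psd A" and "A \<noteq> 0" and "pd B"
  shows "0 < inner A B"
proof -
  obtain vs where vs: "A = sum_list (map outer vs)"
    using psd_eq_sum_outer[OF assms(1)] by blast
  obtain v where "v \<in> set vs" "v \<noteq> 0"
  proof (cases "\<forall>v\<in>set vs. v = 0")
    case True
    then have "A = 0"
      unfolding vs by (induction vs) (auto simp: outer_def vec_eq_iff)
    then show ?thesis
      using assms(2) by blast
  qed blast
  have "0 < Re (sesq B v v)"
    using assms(3) \<open>v \<noteq> 0\<close> unfolding pd_def by blast
  also have "\<dots> \<le> (\<Sum>u\<leftarrow>vs. Re (sesq B u u))"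
    using \<open>v \<in> set vs\<close> pd_imp_psd[OF assms(3)] unfolding psd_iff_sesq
    by (intro member_le_sum_list) auto
  finally have "0 < (\<Sum>u\<leftarrow>vs. Re (sesq B u u))" .
  then show ?thesis
    unfolding vs inner_commute[of _ B] inner_sum_outer .
qed

lemma psd_iff_hermitian_inner_outer: "psd A \<longleftrightarrow> hermitian A \<and> (\<forall>x. 0 \<le> inner A (outer x))"
  unfolding inner_outer psd_iff_sesq using psd_hermitian hermitian_sesq_real psd_iff_sesq by blast

lemma Re_mtrace_pos: "psd A \<Longrightarrow> A \<noteq> 0 \<Longrightarrow> 0 < Re (mtrace A)"
  using inner_psd_pd_pos[OF _ _ pd_mat_1] by (simp add: inner_mat_1)

lemma mtrace_scaleR: "mtrace (r *\<^sub>R A) = of_real r * mtrace A"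
  by (simp add: mtrace_def sum_distrib_left scaleR_conv_of_real[where 'a=complex])

lemma density_scaleR_inverse_trace:
  assumes "psd A" and "A \<noteq> 0"
  shows "density ((1 / Re (mtrace A)) *\<^sub>R A)"
proof -
  define \<tau> where "\<tau> = Re (mtrace A)"
  have "0 < \<tau>"
    unfolding \<tau>_def using assms by (rule Re_mtrace_pos)
  have "Im (A $ i $ i) = 0" for i
    using assms(1) unfolding psd_iff_sesq by (metis sesq_axis_axis)
  then have "mtrace A = of_real \<tau>"
    by (simp add: \<tau>_def complex_eq_iff mtrace_def Im_sum)
  then have "mtrace ((1 / \<tau>) *\<^sub>R A) = 1"
    using \<open>0 < \<tau>\<close> by (simp add: mtrace_scaleR)
  moreover have "psd ((1 / \<tau>) *\<^sub>R A)"
    using \<open>0 < \<tau>\<close> by (simp add: psd_scaleR assms(1))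
  ultimately show ?thesis
    unfolding density_def \<tau>_def by blast
qed

section \<open>The theorem of alternatives\<close>

lemma linear_madj: "linear madj"
  by (intro linearI) (simp_all add: madj_def vec_eq_iff scaleR_conv_of_real[where 'a=complex])

lemma madj_madj [simp]: "madj (madj A) = A"
  by (simp add: madj_def vec_eq_iff)

lemma msmult_of_real: "msmult (of_real r) X = r *\<^sub>R X"
  by (simp add: msmult_def vec_eq_iff scaleR_conv_of_real[where 'a=complex])

lemma linear_if_lin_map:
  assumes "lin_map \<Psi>"
  shows "linear \<Psi>"
proof (rule linearI)
  have "\<Psi> (msmult (of_real r) X) = msmult (of_real r) (\<Psi> X)" for r X
    using assms unfolding lin_map_def by blast
  then show "\<Psi> (r *\<^sub>R X) = r *\<^sub>R \<Psi> X" for r X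
    by (simp add: msmult_of_real)
  show "\<Psi> (X + Y) = \<Psi> X + \<Psi> Y" for X Y
    using assms unfolding lin_map_def by simp
qed

lemma herm_pres_hermitian:
  assumes "herm_pres \<Psi>" and "hermitian X"
  shows "hermitian (\<Psi> X)"
proof -
  have "madj (\<Psi> X) = \<Psi> (madj X)"
    using assms(1) unfolding herm_pres_def by simp
  then show ?thesis
    using assms(2) unfolding hermitian_def by simp
qed

lemma dual_inner:
  assumes "is_dual_map \<Psi> \<Psi>s"
  shows "inner (\<Psi>s Y) X = inner Y (\<Psi> X)"
  using assms unfolding is_dual_map_def Re_mtrace_madj_mult[symmetric] by simp

lemma dual_sesq:
  assumes "is_dual_map \<Psi> \<Psi>s"
  shows "sesq (\<Psi>s Y) x x = cnj (mtrace (madj Y ** \<Psi> (outer x)))"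
proof -
  have "cnj (sesq (\<Psi>s Y) x x) = mtrace (madj Y ** \<Psi> (outer x))"
    using assms unfolding is_dual_map_def mtrace_madj_mult_outer[symmetric] by simp
  from arg_cong[where f = cnj, OF this] show ?thesis
    by simp
qed

lemma semi_positive_iff_pd:
  assumes "lin_map \<Psi>" and "trace_pres \<Psi>"
  shows "semi_positive \<Psi> \<longleftrightarrow> (\<exists>\<rho>. pd \<rho> \<and> pd (\<Psi> \<rho>))"
proof
  assume "semi_positive \<Psi>"
  then show "\<exists>\<rho>. pd \<rho> \<and> pd (\<Psi> \<rho>)"
    unfolding semi_positive_def density_def pd_iff_psd_invertible by blast
next
  assume "\<exists>\<rho>. pd \<rho> \<and> pd (\<Psi> \<rho>)"
  then obtain \<rho> where \<rho>: "pd \<rho>" "pd (\<Psi> \<rho>)"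
    by blast
  define r where "r = 1 / Re (mtrace \<rho>)"
  have "0 < r"
    unfolding r_def using Re_mtrace_pos[OF pd_imp_psd pd_nonzero, OF \<rho>(1) \<rho>(1)] by simp
  have "density (r *\<^sub>R \<rho>)"
    unfolding r_def using \<rho>(1) by (intro density_scaleR_inverse_trace pd_imp_psd pd_nonzero)
  moreover have "pd (r *\<^sub>R \<rho>)" and "pd (\<Psi> (r *\<^sub>R \<rho>))"
    using \<rho> \<open>0 < r\<close> linear_scale[OF linear_if_lin_map[OF assms(1)]] by (simp_all add: pd_scaleR)
  moreover have "mtrace (\<Psi> (r *\<^sub>R \<rho>)) = 1"
    using assms(2) \<open>density (r *\<^sub>R \<rho>)\<close> unfolding trace_pres_def density_def by simp
  ultimately show "semi_positive \<Psi>"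
    unfolding semi_positive_def density_def pd_iff_psd_invertible by blast
qed

lemma not_semi_nonnegative_neg_dual:
  assumes "is_dual_map \<Psi> \<Psi>s" and "pd \<rho>" and "pd (\<Psi> \<rho>)"
  shows "\<not> semi_nonnegative (\<lambda>Y. - \<Psi>s Y)"
proof
  assume "semi_nonnegative (\<lambda>Y. - \<Psi>s Y)"
  then obtain \<sigma> where \<sigma>: "density \<sigma>" "psd (- \<Psi>s \<sigma>)"
    unfolding semi_nonnegative_def by blast
  then have "\<sigma> \<noteq> 0"
    by (auto simp: density_def mtrace_def)
  then have "0 < inner \<sigma> (\<Psi> \<rho>)"
    using \<sigma>(1) assms(3) unfolding density_def by (intro inner_psd_pd_pos) auto
  also have "\<dots> = - inner (- \<Psi>s \<sigma>) \<rho>"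
    using dual_inner[OF assms(1)] by simp
  also have "\<dots> \<le> 0"
    using inner_psd_nonneg[OF \<sigma>(2) pd_imp_psd[OF assms(2)]] by simp
  finally show False
    by simp
qed

text \<open>The anti-Hermitian summands force every functional that is nonnegative on this set
  to be Hermitian.\<close>
definition pd_difference_set :: "(complex^'n^'n \<Rightarrow> complex^'m^'m) \<Rightarrow> (complex^'m^'m) set" where
  "pd_difference_set \<Psi> = {\<Psi> \<rho> - P + K | \<rho> P K. pd \<rho> \<and> pd P \<and> madj K = - K}"

lemma pd_difference_setI:
  assumes "pd \<rho>" and "pd P" and "madj K = - K"
  shows "\<Psi> \<rho> - P + K \<in> pd_difference_set \<Psi>"
  unfolding pd_difference_set_def using assms
  by (intro CollectI exI[of _ \<rho>] exI[of _ P] exI[of _ K]) simp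

lemma convex_pd_difference_set:
  assumes "linear \<Psi>"
  shows "convex (pd_difference_set \<Psi>)"
proof (rule convexI)
  fix X Y and u v :: real
  assume uv: "0 \<le> u" "0 \<le> v" "u + v = 1"
  assume "X \<in> pd_difference_set \<Psi>"
  then obtain \<rho>1 P1 K1 where X: "X = \<Psi> \<rho>1 - P1 + K1" "pd \<rho>1" "pd P1" "madj K1 = - K1"
    unfolding pd_difference_set_def by blast
  assume "Y \<in> pd_difference_set \<Psi>"
  then obtain \<rho>2 P2 K2 where Y: "Y = \<Psi> \<rho>2 - P2 + K2" "pd \<rho>2" "pd P2" "madj K2 = - K2"
    unfolding pd_difference_set_def by blast
  have "u *\<^sub>R X + v *\<^sub>R Y
      = \<Psi> (u *\<^sub>R \<rho>1 + v *\<^sub>R \<rho>2) - (u *\<^sub>R P1 + v *\<^sub>R P2) + (u *\<^sub>R K1 + v *\<^sub>R K2)"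
    unfolding X Y linear_add[OF assms] linear_scale[OF assms] by (simp add: algebra_simps)
  moreover have "pd (u *\<^sub>R \<rho>1 + v *\<^sub>R \<rho>2)" and "pd (u *\<^sub>R P1 + v *\<^sub>R P2)"
    using convexD[OF convex_pd, of \<rho>1 \<rho>2 u v] convexD[OF convex_pd, of P1 P2 u v] uv X(2,3) Y(2,3)
    by simp_all
  moreover have "madj (u *\<^sub>R K1 + v *\<^sub>R K2) = - (u *\<^sub>R K1 + v *\<^sub>R K2)"
    using X(4) Y(4) by (simp add: linear_add[OF linear_madj] linear_scale[OF linear_madj])
  ultimately show "u *\<^sub>R X + v *\<^sub>R Y \<in> pd_difference_set \<Psi>"
    by (simp only: pd_difference_setI)
qed

lemma pd_witness_if_zero_in_pd_difference_set:
  assumes "herm_pres \<Psi>" and "0 \<in> pd_difference_set \<Psi>"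
  shows "\<exists>\<rho>. pd \<rho> \<and> pd (\<Psi> \<rho>)"
proof -
  obtain \<rho> P K where "0 = \<Psi> \<rho> - P + K" "pd \<rho>" "pd P" "madj K = - K"
    using assms(2) unfolding pd_difference_set_def by blast
  moreover from this have "K = P - \<Psi> \<rho>"
    by (simp add: algebra_simps)
  moreover have "hermitian P" and "hermitian (\<Psi> \<rho>)"
    using \<open>pd P\<close> \<open>pd \<rho>\<close> herm_pres_hermitian[OF assms(1)] by (simp_all add: pd_imp_psd psd_hermitian)
  ultimately have "madj K = K"
    unfolding hermitian_def by (simp add: linear_diff[OF linear_madj])
  then have "K + K = 0"
    using \<open>madj K = - K\<close> by (simp add: eq_neg_iff_add_eq_0)
  then have "K = 0"
    by (simp flip: scaleR_2)
  then have "\<Psi> \<rho> = P"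
    using \<open>K = P - \<Psi> \<rho>\<close> by simp
  then show ?thesis
    using \<open>pd \<rho>\<close> \<open>pd P\<close> by blast
qed

lemma separating_functional_hermitian:
  assumes "linear \<Psi>" and sep: "\<forall>X\<in>pd_difference_set \<Psi>. 0 \<le> inner a X"
  shows "hermitian a"
proof -
  have "inner a K = 0" if "madj K = - K" for K
  proof -
    define c where "c = inner a (\<Psi> (mat 1) - mat 1)"
    have nonneg: "0 \<le> c + r * inner a K" for r
    proof -
      have "madj (r *\<^sub>R K) = - (r *\<^sub>R K)"
        using that by (simp add: linear_scale[OF linear_madj])
      then have "\<Psi> (mat 1) - mat 1 + r *\<^sub>R K \<in> pd_difference_set \<Psi>"
        by (intro pd_difference_setI pd_mat_1)
      then have "0 \<le> inner a (\<Psi> (mat 1) - mat 1 + r *\<^sub>R K)"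
        using sep by blast
      then show ?thesis
        by (simp add: c_def inner_add_right)
    qed
    have "0 \<le> inner a K"
      by (rule nonneg_if_nonneg_on_ray(2)[of c]) (rule nonneg)
    moreover have "0 \<le> - inner a K"
      by (rule nonneg_if_nonneg_on_ray(2)[of c]) (metis nonneg mult_minus_left mult_minus_right)
    ultimately show ?thesis
      by simp
  qed
  moreover have "madj (a - madj a) = - (a - madj a)"
    by (simp add: linear_diff[OF linear_madj])
  ultimately have "inner a (a - madj a) = 0"
    by blast
  moreover have "inner (madj a) (madj a) = inner a a"
    by (rule inner_madj)
  ultimately have "inner (a - madj a) (a - madj a) = 0"
    by (simp add: inner_diff_left inner_diff_right inner_commute)
  then show ?thesis
    unfolding hermitian_def by simp
qed

lemma separating_functional_nonneg_psd:
  assumes "linear \<Psi>" and sep: "\<forall>X\<in>pd_difference_set \<Psi>. 0 \<le> inner a X"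
    and "psd \<rho>" and "psd P"
  shows "0 \<le> inner a (\<Psi> \<rho> - P)"
proof -
  define d where "d = inner a (\<Psi> (mat 1) - mat 1)"
  have "0 \<le> inner a (\<Psi> \<rho> - P) + e * d" if "0 < e" for e
  proof -
    have "pd (e *\<^sub>R mat 1 + \<rho>)" and "pd (e *\<^sub>R mat 1 + P)"
      using assms(3,4) \<open>0 < e\<close> by (simp_all add: pd_add_psd pd_scaleR pd_mat_1)
    moreover have "madj 0 = - (0 :: complex^'m^'m)"
      by (simp add: linear_0[OF linear_madj])
    ultimately have "\<Psi> (e *\<^sub>R mat 1 + \<rho>) - (e *\<^sub>R mat 1 + P) + 0 \<in> pd_difference_set \<Psi>"
      by (rule pd_difference_setI)
    then have "0 \<le> inner a (\<Psi> (e *\<^sub>R mat 1 + \<rho>) - (e *\<^sub>R mat 1 + P) + 0)"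
      using sep by blast
    then show ?thesis
      by (simp add: d_def linear_add[OF assms(1)] linear_scale[OF assms(1)]
          inner_add_right inner_diff_right algebra_simps)
  qed
  then show ?thesis
    by (rule nonneg_if_nonneg_on_ray(1))
qed

lemma separating_functional_neg_psd:
  assumes "linear \<Psi>" and sep: "\<forall>X\<in>pd_difference_set \<Psi>. 0 \<le> inner a X"
  shows "psd (- a)"
  unfolding psd_iff_hermitian_inner_outer
proof
  show "hermitian (- a)"
    using separating_functional_hermitian[OF assms] unfolding hermitian_def
    by (simp add: linear_neg[OF linear_madj])
  show "\<forall>x. 0 \<le> inner (- a) (outer x)"
    using separating_functional_nonneg_psd[OF assms psd_zero psd_outer]
    by (simp add: linear_0[OF assms(1)])
qed

lemma psd_neg_dual:
  assumes "herm_pres \<Psi>" and "is_dual_map \<Psi> \<Psi>s" and "hermitian \<sigma>"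
    and "\<And>x. inner \<sigma> (\<Psi> (outer x)) \<le> 0"
  shows "psd (- \<Psi>s \<sigma>)"
  unfolding psd_iff_sesq
proof
  fix x
  let ?z = "mtrace (\<sigma> ** \<Psi> (outer x))"
  have "hermitian (\<Psi> (outer x))"
    using assms(1) psd_hermitian[OF psd_outer] by (rule herm_pres_hermitian)
  then have "Im ?z = 0"
    using assms(3) by (intro mtrace_mult_hermitian_real)
  moreover have "Re ?z \<le> 0"
    using assms(3) assms(4)[of x] Re_mtrace_madj_mult[of \<sigma>] unfolding hermitian_def by simp
  moreover have "sesq (- \<Psi>s \<sigma>) x x = - cnj ?z"
    using dual_sesq[OF assms(2)] assms(3) unfolding hermitian_def by (simp add: sesq_minus)
  ultimately show "Im (sesq (- \<Psi>s \<sigma>) x x) = 0 \<and> 0 \<le> Re (sesq (- \<Psi>s \<sigma>) x x)"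
    by simp
qed

lemma semi_nonnegative_neg_dual_if_not_semi_positive:
  assumes "lin_map \<Psi>" and "herm_pres \<Psi>" and "trace_pres \<Psi>" and "is_dual_map \<Psi> \<Psi>s"
    and "\<not> semi_positive \<Psi>"
  shows "semi_nonnegative (\<lambda>Y. - \<Psi>s Y)"
proof -
  have lin: "linear \<Psi>"
    using assms(1) by (rule linear_if_lin_map)
  have "0 \<notin> pd_difference_set \<Psi>"
    using pd_witness_if_zero_in_pd_difference_set[OF assms(2)] semi_positive_iff_pd[OF assms(1,3)]
      assms(5) by blast
  then obtain a where "a \<noteq> 0" and sep: "\<forall>X\<in>pd_difference_set \<Psi>. 0 \<le> inner a X"
    using separating_hyperplane_set_0[OF convex_pd_difference_set[OF lin]] by blast
  have "psd (- a)"
    using lin sep by (rule separating_functional_neg_psd)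
  define \<tau> where "\<tau> = Re (mtrace (- a))"
  define \<sigma> where "\<sigma> = (1 / \<tau>) *\<^sub>R (- a)"
  have "0 < \<tau>"
    unfolding \<tau>_def using \<open>psd (- a)\<close> \<open>a \<noteq> 0\<close> by (intro Re_mtrace_pos) simp_all
  have "density \<sigma>"
    unfolding \<sigma>_def \<tau>_def using \<open>psd (- a)\<close> \<open>a \<noteq> 0\<close> by (intro density_scaleR_inverse_trace) simp_all
  moreover have "psd (- \<Psi>s \<sigma>)"
  proof (rule psd_neg_dual[OF assms(2,4)])
    show "hermitian \<sigma>"
      using \<open>density \<sigma>\<close> unfolding density_def by (simp add: psd_hermitian)
    show "inner \<sigma> (\<Psi> (outer x)) \<le> 0" for x
      using separating_functional_nonneg_psd[OF lin sep psd_outer psd_zero, of x] \<open>0 < \<tau>\<close>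
      by (simp add: \<sigma>_def inner_minus_left)
  qed
  ultimately show ?thesis
    unfolding semi_nonnegative_def by blast
qed

theorem theorem5:
  fixes \<Psi> :: "complex^'n^'n \<Rightarrow> complex^'m^'m"
    and \<Psi>s :: "complex^'m^'m \<Rightarrow> complex^'n^'n"
  assumes "lin_map \<Psi>" and "herm_pres \<Psi>" and "trace_pres \<Psi>"
    and "is_dual_map \<Psi> \<Psi>s"
  shows "semi_positive \<Psi> \<longleftrightarrow> \<not> semi_nonnegative (\<lambda>Y. - \<Psi>s Y)"
proof
  assume "semi_positive \<Psi>"
  then obtain \<rho> where "pd \<rho>" and "pd (\<Psi> \<rho>)"
    using semi_positive_iff_pd[OF assms(1,3)] by blast
  then show "\<not> semi_nonnegative (\<lambda>Y. - \<Psi>s Y)"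
    by (rule not_semi_nonnegative_neg_dual[OF assms(4)])
next
  assume "\<not> semi_nonnegative (\<lambda>Y. - \<Psi>s Y)"
  then show "semi_positive \<Psi>"
    using semi_nonnegative_neg_dual_if_not_semi_positive[OF assms] by blast
qed

end
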